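(* Let $\phi$ be a strictly convex norm on $\mathbf{R}^n$ of class $\mathcal{C}^2$ on $\mathbf{R}^n\setminus\{0\}$ and $K\subseteq\mathbf{R}^n$ closed. Then $\rho^\phi_K:\mathbf{R}^n\to[1,\infty]$ is upper semicontinuous and $$\rho^\phi_K(x)=t\,\rho^\phi_K(a+t(x-a))\quad\text{for }x\in\mathbf{R}^n,\ a\in\xi^\phi_K(x),\ 0<t\le\rho^\phi_K(x),\ t<\infty.$$ Moreover, $\mathrm{Cut}^\phi(K)=\{x\in\mathbf{R}^n:\rho^\phi_K(x)=1\}$.
   Context: A norm $\phi$ is strictly convex if $\phi(a+b)=\phi(a)+\phi(b)$ implies $\phi(b)a=\phi(a)b$. For closed $K$: $\delta^\phi_K(x)=\inf\{\phi(y-x):y\in K\}$; $\xi^\phi_K(x)=K\cap\{w:\phi(x-w)=\delta^\phi_K(x)\}$; $\rho^\phi_K(x)=\sup\bigl(\mathbf{R}\cap\{s:\delta^\phi_K(a+s(x-a))=s\,\delta^\phi_K(x)\}\bigr)$ for any $a\in\xi^\phi_K(x)$ (independent of the choice of $a$). $N^\phi(K)=\{(a,\eta):a\in K,\ \phi(\eta)=1,\ \delta^\phi_K(a+s\eta)=s\text{ for some }s>0\}$, $r^\phi_K(a,\eta)=\sup\{s>0:\delta^\phi_K(a+s\eta)=s\}$, and $\mathrm{Cut}^\phi(K)=\{a+r^\phi_K(a,\eta)\eta:(a,\eta)\in N^\phi(K),\ r^\phi_K(a,\eta)<\infty\}$. *)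

theory Defs
  imports "HOL-Analysis.Analysis"
begin

definition is_norm :: "('a::real_vector \<Rightarrow> real) \<Rightarrow> bool" where
  "is_norm \<phi> \<longleftrightarrow> (\<forall>x. \<phi> x = 0 \<longleftrightarrow> x = 0) \<and> (\<forall>c x. \<phi> (c *\<^sub>R x) = \<bar>c\<bar> * \<phi> x)
     \<and> (\<forall>x y. \<phi> (x + y) \<le> \<phi> x + \<phi> y)"

definition strictly_convex_norm :: "('a::real_vector \<Rightarrow> real) \<Rightarrow> bool" where
  "strictly_convex_norm \<phi> \<longleftrightarrow> is_norm \<phi> \<and>
     (\<forall>a b. \<phi> (a + b) = \<phi> a + \<phi> b \<longrightarrow> \<phi> b *\<^sub>R a = \<phi> a *\<^sub>R b)"

definition C2_on :: "'a::euclidean_space set \<Rightarrow> ('a \<Rightarrow> real) \<Rightarrow> bool" where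
  "C2_on S f \<longleftrightarrow> (\<exists>(f' :: 'a \<Rightarrow> 'a \<Rightarrow>\<^sub>L real) (f'' :: 'a \<Rightarrow> 'a \<Rightarrow>\<^sub>L ('a \<Rightarrow>\<^sub>L real)).
      (\<forall>x\<in>S. (f has_derivative blinfun_apply (f' x)) (at x)) \<and>
      (\<forall>x\<in>S. (f' has_derivative blinfun_apply (f'' x)) (at x)) \<and>
      continuous_on S f'')"

definition upper_semicontinuous :: "('a::topological_space \<Rightarrow> ereal) \<Rightarrow> bool" where
  "upper_semicontinuous f \<longleftrightarrow> (\<forall>c. open {x. f x < c})"

definition dist_fun :: "('a::real_vector \<Rightarrow> real) \<Rightarrow> 'a set \<Rightarrow> 'a \<Rightarrow> real" where
  "dist_fun \<phi> K x = Inf {\<phi> (y - x) | y. y \<in> K}"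

definition proj_set :: "('a::real_vector \<Rightarrow> real) \<Rightarrow> 'a set \<Rightarrow> 'a \<Rightarrow> 'a set" where
  "proj_set \<phi> K x = {w \<in> K. \<phi> (x - w) = dist_fun \<phi> K x}"

definition reach_fun :: "('a::real_vector \<Rightarrow> real) \<Rightarrow> 'a set \<Rightarrow> 'a \<Rightarrow> ereal" where
  "reach_fun \<phi> K x = (let a = (SOME a. a \<in> proj_set \<phi> K x) in
     Sup (ereal ` {s::real. dist_fun \<phi> K (a + s *\<^sub>R (x - a)) = s * dist_fun \<phi> K x}))"

definition normal_bundle :: "('a::real_vector \<Rightarrow> real) \<Rightarrow> 'a set \<Rightarrow> ('a \<times> 'a) set" where
  "normal_bundle \<phi> K = {(a, \<eta>). a \<in> K \<and> \<phi> \<eta> = 1 \<and> (\<exists>s>0. dist_fun \<phi> K (a + s *\<^sub>R \<eta>) = s)}"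

definition reach_normal :: "('a::real_vector \<Rightarrow> real) \<Rightarrow> 'a set \<Rightarrow> 'a \<Rightarrow> 'a \<Rightarrow> ereal" where
  "reach_normal \<phi> K a \<eta> = Sup (ereal ` {s::real. s > 0 \<and> dist_fun \<phi> K (a + s *\<^sub>R \<eta>) = s})"

definition cut_locus :: "('a::real_vector \<Rightarrow> real) \<Rightarrow> 'a set \<Rightarrow> 'a set" where
  "cut_locus \<phi> K = {a + real_of_ereal (reach_normal \<phi> K a \<eta>) *\<^sub>R \<eta> | a \<eta>.
      (a, \<eta>) \<in> normal_bundle \<phi> K \<and> reach_normal \<phi> K a \<eta> < \<infinity>}"

end

theory Submission
  imports Defs
begin

text \<open>Fix a nearest point a of x and call s admissible if a + s(x - a) lies at distance
  s \<delta>(x) from K. Since \<delta> is 1-Lipschitz for \<phi> and \<delta>(a + s(x - a)) \<le> s \<delta>(x) for s \<ge> 0,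
  the admissible s \<ge> 0 form a closed interval [0, \<rho>] containing 1. Replacing x by
  a + t(x - a) rescales this interval by 1/t, which gives the homogeneity identity; the same
  rescaling identifies r(a, \<eta>) with \<delta>(x) \<rho>(x) for \<eta> = (x - a)/\<delta>(x), which describes the cut
  locus. Strict convexity makes the nearest point unique as soon as some s > 1 is admissible,
  so \<rho> does not depend on the choice of a. Upper semicontinuity holds because nearest points
  of a convergent sequence subconverge to a nearest point of the limit, and admissibility of a
  fixed s is a closed condition.\<close>

lemma Sup_ereal_image_scaled:
  fixes A :: "real set"
  assumes "A \<noteq> {}" and "0 \<le> c"
  shows "Sup (ereal ` (\<lambda>u. c * u) ` A) = ereal c * Sup (ereal ` A)"
  using Sup_ereal_mult_left'[of A c ereal] assms by (simp add: image_comp o_def)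

lemma Sup_ereal_image_pos_part:
  fixes S :: "real set"
  assumes "u\<^sub>0 \<in> S" and "0 < u\<^sub>0"
  shows "Sup (ereal ` {u \<in> S. 0 < u}) = Sup (ereal ` S)"
proof (rule antisym)
  show "Sup (ereal ` {u \<in> S. 0 < u}) \<le> Sup (ereal ` S)" by (rule Sup_subset_mono) auto
  have u\<^sub>0_le: "ereal u\<^sub>0 \<le> Sup (ereal ` {u \<in> S. 0 < u})" using assms by (auto intro: Sup_upper)
  show "Sup (ereal ` S) \<le> Sup (ereal ` {u \<in> S. 0 < u})"
  proof (rule Sup_least, clarify)
    fix u assume "u \<in> S"
    show "ereal u \<le> Sup (ereal ` {u \<in> S. 0 < u})"
    proof (cases "0 < u")
      case True
      with \<open>u \<in> S\<close> show ?thesis by (auto intro: Sup_upper)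
    next
      case False
      then have "ereal u \<le> ereal u\<^sub>0" using assms(2) by simp
      then show ?thesis using u\<^sub>0_le by (rule order_trans)
    qed
  qed
qed

locale norm_function =
  fixes \<phi> :: "'a::euclidean_space \<Rightarrow> real"
  assumes is_norm: "is_norm \<phi>"
begin

lemma zero_iff: "\<phi> x = 0 \<longleftrightarrow> x = 0"
  using is_norm unfolding is_norm_def by auto

lemma zero [simp]: "\<phi> 0 = 0"
  using zero_iff by simp

lemma scaleR: "\<phi> (c *\<^sub>R x) = \<bar>c\<bar> * \<phi> x"
  using is_norm unfolding is_norm_def by auto

lemma triangle: "\<phi> (x + y) \<le> \<phi> x + \<phi> y"
  using is_norm unfolding is_norm_def by auto

lemma minus: "\<phi> (- x) = \<phi> x"
  using scaleR[of "-1" x] by simp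

lemma minus_commute: "\<phi> (x - y) = \<phi> (y - x)"
  using minus[of "x - y"] by simp

lemma triangle_diff: "\<phi> (x - z) \<le> \<phi> (x - y) + \<phi> (y - z)"
  using triangle[of "x - y" "y - z"] by simp

lemma nonneg: "0 \<le> \<phi> x"
  using triangle[of x "- x"] minus[of x] by simp

lemma convex: "convex_on UNIV \<phi>"
proof (rule convex_onI)
  fix t x y assume "0 < t" "t < (1::real)"
  then show "\<phi> ((1 - t) *\<^sub>R x + t *\<^sub>R y) \<le> (1 - t) * \<phi> x + t * \<phi> y"
    using triangle[of "(1 - t) *\<^sub>R x" "t *\<^sub>R y"] by (simp add: scaleR)
qed simp

lemma continuous: "continuous_on UNIV \<phi>"
  by (rule convex_on_continuous[OF open_UNIV convex])

lemma isCont: "isCont \<phi> x"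
  using continuous by (simp add: continuous_on_eq_continuous_at)

lemma eq_norm_times_sphere: "\<phi> v = norm v * \<phi> (v /\<^sub>R norm v)"
  by (cases "v = 0") (simp_all add: scaleR zero_iff)

lemma norm_equivalent:
  obtains m M where "0 < m" "0 < M" "\<And>v. m * norm v \<le> \<phi> v" "\<And>v. \<phi> v \<le> M * norm v"
proof -
  have sphere: "compact (sphere (0::'a) 1)" "sphere (0::'a) 1 \<noteq> {}"
    using vector_choose_size[of 1] by (auto simp: dist_norm)
  have cont: "continuous_on (sphere 0 1) \<phi>"
    using continuous by (rule continuous_on_subset) simp
  obtain u where u: "u \<in> sphere 0 1" "\<forall>y\<in>sphere 0 1. \<phi> u \<le> \<phi> y"
    using continuous_attains_inf[OF sphere cont] by blast
  obtain w where w: "w \<in> sphere 0 1" "\<forall>y\<in>sphere 0 1. \<phi> y \<le> \<phi> w"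
    using continuous_attains_sup[OF sphere cont] by blast
  have "\<phi> u * norm v \<le> \<phi> v \<and> \<phi> v \<le> \<phi> w * norm v" for v
  proof (cases "v = 0")
    case False
    then have "v /\<^sub>R norm v \<in> sphere 0 1" by simp
    then show ?thesis
      using u w eq_norm_times_sphere[of v] by (simp add: mult.commute mult_left_mono)
  qed simp
  moreover have "u \<noteq> 0" "w \<noteq> 0" using u(1) w(1) by auto
  then have "0 < \<phi> u" "0 < \<phi> w" using nonneg zero_iff by (simp_all add: less_le)
  ultimately show thesis using that by blast
qed

end

definition reach_params :: "('a::real_vector \<Rightarrow> real) \<Rightarrow> 'a set \<Rightarrow> 'a \<Rightarrow> 'a \<Rightarrow> real set" where
  "reach_params \<phi> K x a = {s. dist_fun \<phi> K (a + s *\<^sub>R (x - a)) = s * dist_fun \<phi> K x}"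

definition reach_at :: "('a::real_vector \<Rightarrow> real) \<Rightarrow> 'a set \<Rightarrow> 'a \<Rightarrow> 'a \<Rightarrow> ereal" where
  "reach_at \<phi> K x a = Sup (ereal ` reach_params \<phi> K x a)"

lemma reach_fun_eq_reach_at_some: "reach_fun \<phi> K x = reach_at \<phi> K x (SOME a. a \<in> proj_set \<phi> K x)"
  unfolding reach_fun_def reach_at_def reach_params_def Let_def ..

locale dist_to_closed = norm_function \<phi> for \<phi> :: "'a::euclidean_space \<Rightarrow> real" +
  fixes K :: "'a set"
  assumes closed_K: "closed K" and K_nonempty: "K \<noteq> {}"
begin

abbreviation \<delta> where "\<delta> \<equiv> dist_fun \<phi> K"
abbreviation \<xi> where "\<xi> \<equiv> proj_set \<phi> K"

lemma dist_fun_le: "y \<in> K \<Longrightarrow> \<delta> x \<le> \<phi> (y - x)"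
  unfolding dist_fun_def by (rule cInf_lower) (auto intro: bdd_belowI[of _ 0] simp: nonneg)

lemma dist_fun_ge: "(\<And>y. y \<in> K \<Longrightarrow> c \<le> \<phi> (y - x)) \<Longrightarrow> c \<le> \<delta> x"
  unfolding dist_fun_def using K_nonempty by (intro cInf_greatest) auto

lemma dist_fun_nonneg: "0 \<le> \<delta> x"
  by (rule dist_fun_ge) (rule nonneg)

lemma proj_setD: assumes "a \<in> \<xi> x" shows "a \<in> K" and "\<phi> (x - a) = \<delta> x"
  using assms unfolding proj_set_def by auto

text \<open>Nearest points lie in a compact ball, since \<phi> dominates a multiple of the Euclidean norm.\<close>
lemma proj_set_nonempty: obtains a where "a \<in> \<xi> x"
proof -
  obtain m where m: "0 < m" "\<And>v. m * norm v \<le> \<phi> v" using norm_equivalent by metis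
  obtain y0 where y0: "y0 \<in> K" using K_nonempty by auto
  define C where "C = K \<inter> cball x (\<phi> (y0 - x) / m)"
  have compact: "compact C" unfolding C_def by (rule closed_Int_compact[OF closed_K compact_cball])
  have y0C: "y0 \<in> C"
    unfolding C_def using y0 m m(2)[of "y0 - x"] by (simp add: dist_norm field_simps norm_minus_commute)
  have cont: "continuous_on C (\<lambda>y. \<phi> (y - x))"
    by (rule continuous_on_compose2[OF continuous]) (auto intro!: continuous_intros)
  obtain a where a: "a \<in> C" "\<forall>y\<in>C. \<phi> (a - x) \<le> \<phi> (y - x)"
    using continuous_attains_inf[OF compact _ cont] y0C by blast
  have "\<phi> (a - x) \<le> \<phi> (y - x)" if "y \<in> K" for y
  proof (cases "y \<in> C")
    case False
    then have "\<phi> (y0 - x) < m * norm (y - x)"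
      using that m(1) by (simp add: C_def dist_norm norm_minus_commute field_simps)
    then show ?thesis using m(2)[of "y - x"] a y0C by fastforce
  qed (use a in auto)
  moreover have "a \<in> K" using a(1) unfolding C_def by simp
  ultimately have "\<delta> x = \<phi> (a - x)"
    by (intro antisym dist_fun_le dist_fun_ge)
  with \<open>a \<in> K\<close> have "a \<in> \<xi> x" unfolding proj_set_def by (simp add: minus_commute)
  then show thesis by (rule that)
qed

lemma dist_fun_triangle: "\<delta> x \<le> \<delta> z + \<phi> (z - x)"
proof -
  obtain a where a: "a \<in> \<xi> z" by (rule proj_set_nonempty)
  have "\<delta> x \<le> \<phi> (a - x)" using dist_fun_le proj_setD(1)[OF a] .
  also have "\<dots> \<le> \<phi> (a - z) + \<phi> (z - x)" by (rule triangle_diff)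
  finally show ?thesis using proj_setD(2)[OF a] by (simp add: minus_commute)
qed

lemma continuous_on_dist_fun: "continuous_on UNIV \<delta>"
proof -
  obtain M where "0 < M" and M: "\<And>v. \<phi> v \<le> M * norm v" using norm_equivalent by metis
  have "\<bar>\<delta> x - \<delta> z\<bar> \<le> M * dist x z" for x z
    using dist_fun_triangle[of x z] dist_fun_triangle[of z x] M[of "z - x"] M[of "x - z"]
    by (simp add: dist_norm norm_minus_commute)
  then have "M-lipschitz_on UNIV \<delta>"
    using \<open>0 < M\<close> by (intro lipschitz_onI) (simp_all add: dist_real_def)
  then show ?thesis by (rule lipschitz_on_continuous_on)
qed

lemma isCont_dist_fun: "isCont \<delta> x"
  using continuous_on_dist_fun by (simp add: continuous_on_eq_continuous_at)

lemma dist_fun_eq_0_iff: "\<delta> x = 0 \<longleftrightarrow> x \<in> K"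
proof
  assume "\<delta> x = 0"
  obtain a where "a \<in> \<xi> x" by (rule proj_set_nonempty)
  with \<open>\<delta> x = 0\<close> show "x \<in> K" using proj_setD zero_iff by fastforce
qed (use dist_fun_le[of x x] dist_fun_nonneg[of x] in simp)

lemma dist_fun_pos: "x \<notin> K \<Longrightarrow> 0 < \<delta> x"
  using dist_fun_eq_0_iff dist_fun_nonneg[of x] by fastforce

lemma proj_set_of_mem: "x \<in> K \<Longrightarrow> \<xi> x = {x}"
  unfolding proj_set_def using dist_fun_eq_0_iff[of x] zero_iff by auto

lemma proj_set_limit:
  assumes lim: "xs \<longlonglongrightarrow> l" and proj: "\<And>n. as n \<in> \<xi> (xs n)"
  obtains r a where "strict_mono r" "(as \<circ> r) \<longlonglongrightarrow> a" "a \<in> \<xi> l"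
proof -
  obtain m where m: "0 < m" "\<And>v. m * norm v \<le> \<phi> v" using norm_equivalent by metis
  have lim_dist: "(\<lambda>n. \<delta> (xs n)) \<longlonglongrightarrow> \<delta> l"
    using isCont_tendsto_compose[OF isCont_dist_fun lim] .
  obtain B where B: "\<And>n. norm (xs n) \<le> B"
    using convergent_imp_bounded[OF lim] unfolding bounded_iff by auto
  obtain D where D: "\<And>n. \<delta> (xs n) \<le> D"
    using convergent_imp_bounded[OF lim_dist] unfolding bounded_iff real_norm_def
    by (meson abs_le_D1 rangeI)
  have "norm (as n) \<le> B + D / m" for n
  proof -
    have "m * norm (xs n - as n) \<le> D"
      using m(2)[of "xs n - as n"] proj_setD(2)[OF proj] D[of n] by simp
    then have "norm (xs n - as n) \<le> D / m"
      using m(1) by (simp add: field_simps)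
    then show ?thesis
      using norm_triangle_sub[of "as n" "xs n"] B[of n] by (simp add: norm_minus_commute)
  qed
  then obtain a r where r: "strict_mono r" "(as \<circ> r) \<longlonglongrightarrow> a"
    using bounded_imp_convergent_subsequence[of as] unfolding bounded_iff by blast
  have "a \<in> K" using closed_sequentially[OF closed_K _ r(2)] proj_setD(1)[OF proj] by simp
  moreover have "\<phi> (l - a) = \<delta> l"
  proof (rule LIMSEQ_unique)
    show "(\<lambda>n. \<phi> (xs (r n) - as (r n))) \<longlonglongrightarrow> \<phi> (l - a)"
      using isCont_tendsto_compose[OF isCont tendsto_diff[OF LIMSEQ_subseq_LIMSEQ[OF lim r(1)] r(2)]]
      by (simp add: o_def)
    show "(\<lambda>n. \<phi> (xs (r n) - as (r n))) \<longlonglongrightarrow> \<delta> l"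
      using LIMSEQ_subseq_LIMSEQ[OF lim_dist r(1)] proj_setD(2)[OF proj] by (simp add: o_def)
  qed
  ultimately show thesis using that r unfolding proj_set_def by blast
qed

lemma reach_params_limit:
  assumes "xs \<longlonglongrightarrow> x" "as \<longlonglongrightarrow> a" "\<And>n. s \<in> reach_params \<phi> K (xs n) (as n)"
  shows "s \<in> reach_params \<phi> K x a"
proof -
  have eq: "\<delta> (as n + s *\<^sub>R (xs n - as n)) = s * \<delta> (xs n)" for n
    using assms(3) by (simp add: reach_params_def)
  have "(\<lambda>n. s * \<delta> (xs n)) \<longlonglongrightarrow> \<delta> (a + s *\<^sub>R (x - a))"
    unfolding eq[symmetric]
    by (intro isCont_tendsto_compose[OF isCont_dist_fun] tendsto_intros assms(1,2))
  moreover have "(\<lambda>n. s * \<delta> (xs n)) \<longlonglongrightarrow> s * \<delta> x"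
    by (intro tendsto_intros isCont_tendsto_compose[OF isCont_dist_fun] assms(1))
  ultimately show ?thesis unfolding reach_params_def by (simp add: LIMSEQ_unique)
qed

lemma reach_params_le:
  assumes "a \<in> \<xi> x" and "0 \<le> s"
  shows "\<delta> (a + s *\<^sub>R (x - a)) \<le> s * \<delta> x"
  using dist_fun_le[OF proj_setD(1)[OF assms(1)], of "a + s *\<^sub>R (x - a)"] assms
  by (simp add: minus scaleR proj_setD(2))

lemma one_mem_reach_params: "1 \<in> reach_params \<phi> K x a"
  unfolding reach_params_def by simp

lemma reach_params_of_mem: "x \<in> K \<Longrightarrow> a \<in> \<xi> x \<Longrightarrow> reach_params \<phi> K x a = UNIV"
  unfolding reach_params_def using proj_set_of_mem dist_fun_eq_0_iff by auto

lemma reach_params_down_closed: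
  assumes a: "a \<in> \<xi> x" and s: "s \<in> reach_params \<phi> K x a" and "0 \<le> s'" "s' \<le> s"
  shows "s' \<in> reach_params \<phi> K x a"
proof -
  have "s * \<delta> x \<le> \<delta> (a + s' *\<^sub>R (x - a)) + \<phi> ((s' - s) *\<^sub>R (x - a))"
    using dist_fun_triangle[of "a + s *\<^sub>R (x - a)" "a + s' *\<^sub>R (x - a)"] s
    by (simp add: reach_params_def algebra_simps)
  also have "\<phi> ((s' - s) *\<^sub>R (x - a)) = (s - s') * \<delta> x"
    using \<open>s' \<le> s\<close> by (simp add: scaleR proj_setD(2)[OF a])
  finally show ?thesis
    using reach_params_le[OF a \<open>0 \<le> s'\<close>] by (simp add: reach_params_def algebra_simps)
qed

lemma closed_reach_params: "closed (reach_params \<phi> K x a)"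
  unfolding reach_params_def
  by (rule closed_Collect_eq[OF continuous_on_compose2[OF continuous_on_dist_fun]])
    (auto intro!: continuous_intros)

lemma one_le_reach_at: "1 \<le> reach_at \<phi> K x a"
  unfolding reach_at_def one_ereal_def using one_mem_reach_params by (rule Sup_upper[OF imageI])

lemma reach_at_of_mem:
  assumes "x \<in> K" and "a \<in> \<xi> x"
  shows "reach_at \<phi> K x a = \<infinity>"
proof (rule ereal_top)
  show "ereal B \<le> reach_at \<phi> K x a" for B
    unfolding reach_at_def reach_params_of_mem[OF assms] by (simp add: Sup_upper)
qed

lemma mem_reach_params_iff:
  assumes a: "a \<in> \<xi> x" and "0 \<le> t"
  shows "t \<in> reach_params \<phi> K x a \<longleftrightarrow> ereal t \<le> reach_at \<phi> K x a"
proof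
  assume t: "ereal t \<le> reach_at \<phi> K x a"
  let ?S = "reach_params \<phi> K x a"
  show "t \<in> ?S"
  proof (cases "ereal t < reach_at \<phi> K x a")
    case True
    then obtain s where "s \<in> ?S" "t < s" unfolding reach_at_def less_Sup_iff by auto
    then show ?thesis using reach_params_down_closed[OF a _ \<open>0 \<le> t\<close>] by simp
  next
    case False
    then have R: "reach_at \<phi> K x a = ereal t" using t by simp
    have "ereal s \<le> ereal t" if "s \<in> ?S" for s
      using that R unfolding reach_at_def by (metis Sup_upper image_eqI)
    then have "bdd_above ?S" by (intro bdd_aboveI[of _ t]) simp
    then have "Sup ?S \<in> ?S"
      using closed_contains_Sup[OF _ _ closed_reach_params] one_mem_reach_params by blast
    moreover have "ereal (Sup ?S) = ereal t"
      using ereal_Sup[of ?S] R unfolding reach_at_def by simp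
    ultimately show ?thesis by simp
  qed
qed (auto simp: reach_at_def intro: Sup_upper)

lemma le_reach_at_iff:
  assumes a: "a \<in> \<xi> x"
  shows "c \<le> reach_at \<phi> K x a \<longleftrightarrow> (\<forall>t\<ge>0. ereal t < c \<longrightarrow> t \<in> reach_params \<phi> K x a)"
proof
  assume below_c: "\<forall>t\<ge>0. ereal t < c \<longrightarrow> t \<in> reach_params \<phi> K x a"
  have "y \<le> reach_at \<phi> K x a" if "y < c" for y
  proof (cases y)
    case (real t)
    then show ?thesis
      using that below_c mem_reach_params_iff[OF a, of t] one_le_reach_at[of x a]
      by (cases "0 \<le> t") (auto intro: order_trans[of _ 1])
  qed (use that in auto)
  then show "c \<le> reach_at \<phi> K x a" by (rule dense_le)
qed (use mem_reach_params_iff[OF a] in auto)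

lemma proj_set_along_ray:
  assumes a: "a \<in> \<xi> x" and "0 \<le> t" and t: "t \<in> reach_params \<phi> K x a"
  shows "a \<in> \<xi> (a + t *\<^sub>R (x - a))"
  using proj_setD[OF a] t \<open>0 \<le> t\<close> unfolding proj_set_def reach_params_def by (simp add: scaleR)

lemma reach_params_along_ray:
  assumes "0 < t" and "t \<in> reach_params \<phi> K x a"
  shows "reach_params \<phi> K x a = (\<lambda>u. t * u) ` reach_params \<phi> K (a + t *\<^sub>R (x - a)) a"
proof -
  have member: "u \<in> reach_params \<phi> K (a + t *\<^sub>R (x - a)) a \<longleftrightarrow> t * u \<in> reach_params \<phi> K x a" for u
    using assms(2) by (simp add: reach_params_def algebra_simps)
  show ?thesis
  proof (intro set_eqI iffI)
    fix v assume "v \<in> reach_params \<phi> K x a"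
    then show "v \<in> (\<lambda>u. t * u) ` reach_params \<phi> K (a + t *\<^sub>R (x - a)) a"
      using member[of "v / t"] \<open>0 < t\<close> by (intro image_eqI[of _ _ "v / t"]) simp_all
  qed (use member in auto)
qed

lemma reach_at_along_ray:
  assumes "0 < t" and "t \<in> reach_params \<phi> K x a"
  shows "reach_at \<phi> K x a = ereal t * reach_at \<phi> K (a + t *\<^sub>R (x - a)) a"
  unfolding reach_at_def reach_params_along_ray[OF assms]
  using one_mem_reach_params \<open>0 < t\<close> by (intro Sup_ereal_image_scaled) auto

lemma reach_normal_eq:
  assumes a: "a \<in> \<xi> x" and "x \<notin> K"
  shows "reach_normal \<phi> K a ((1 / \<delta> x) *\<^sub>R (x - a)) = ereal (\<delta> x) * reach_at \<phi> K x a"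
proof -
  let ?S = "reach_params \<phi> K x a"
  have d: "0 < \<delta> x" using dist_fun_pos[OF \<open>x \<notin> K\<close>] .
  have T_eq: "{s. 0 < s \<and> \<delta> (a + s *\<^sub>R ((1 / \<delta> x) *\<^sub>R (x - a))) = s}
      = (\<lambda>u. \<delta> x * u) ` {u \<in> ?S. 0 < u}"
  proof (intro set_eqI iffI)
    fix s assume "s \<in> {s. 0 < s \<and> \<delta> (a + s *\<^sub>R ((1 / \<delta> x) *\<^sub>R (x - a))) = s}"
    then show "s \<in> (\<lambda>u. \<delta> x * u) ` {u \<in> ?S. 0 < u}"
      using d by (intro image_eqI[of _ _ "s / \<delta> x"]) (simp_all add: reach_params_def)
  qed (use d in \<open>auto simp: reach_params_def\<close>)
  have "reach_normal \<phi> K a ((1 / \<delta> x) *\<^sub>R (x - a))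
      = Sup (ereal ` (\<lambda>u. \<delta> x * u) ` {u \<in> ?S. 0 < u})"
    unfolding reach_normal_def T_eq[symmetric] by (simp add: conj_commute)
  also have "\<dots> = ereal (\<delta> x) * Sup (ereal ` {u \<in> ?S. 0 < u})"
    using one_mem_reach_params[of x a] d by (intro Sup_ereal_image_scaled) auto
  also have "\<dots> = ereal (\<delta> x) * reach_at \<phi> K x a"
    unfolding reach_at_def Sup_ereal_image_pos_part[OF one_mem_reach_params zero_less_one] ..
  finally show ?thesis .
qed

lemma some_mem_proj_set: "(SOME a. a \<in> \<xi> x) \<in> \<xi> x"
  by (metis proj_set_nonempty someI)

end

locale strictly_convex_dist_to_closed = dist_to_closed +
  assumes strictly_convex: "\<And>a b. \<phi> (a + b) = \<phi> a + \<phi> b \<Longrightarrow> \<phi> b *\<^sub>R a = \<phi> a *\<^sub>R b"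
begin

text \<open>With p the point of the ray beyond x, every nearest point b of x gives equality in the
  triangle inequality for p - x and x - b, which strict convexity turns into x - b = x - a.\<close>
lemma proj_set_unique_if_ray_extends:
  assumes a: "a \<in> \<xi> x" and s: "s \<in> reach_params \<phi> K x a" "1 < s" and b: "b \<in> \<xi> x"
  shows "b = a"
proof (cases "x \<in> K")
  case True
  then show ?thesis using a b proj_set_of_mem by auto
next
  case False
  define p where "p = a + s *\<^sub>R (x - a)"
  define d where "d = \<delta> x"
  have "0 < d" using dist_fun_pos[OF False] by (simp add: d_def)
  have p_x: "p - x = (s - 1) *\<^sub>R (x - a)" by (simp add: p_def algebra_simps)
  have A: "\<phi> (p - x) = (s - 1) * d"
    using p_x s(2) proj_setD(2)[OF a] by (simp add: scaleR d_def)
  have B: "\<phi> (x - b) = d" using proj_setD(2)[OF b] by (simp add: d_def)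
  have "s * d = \<delta> p" using s(1) by (simp add: reach_params_def p_def d_def)
  also have "\<dots> \<le> \<phi> (b - p)" using dist_fun_le proj_setD(1)[OF b] .
  finally have "\<phi> (p - x) + \<phi> (x - b) \<le> \<phi> ((p - x) + (x - b))"
    using A B by (simp add: minus_commute algebra_simps)
  then have "\<phi> ((p - x) + (x - b)) = \<phi> (p - x) + \<phi> (x - b)"
    using triangle by (intro antisym)
  then have "d *\<^sub>R (p - x) = ((s - 1) * d) *\<^sub>R (x - b)"
    using strictly_convex A B by metis
  then have "((s - 1) * d) *\<^sub>R (x - a) = ((s - 1) * d) *\<^sub>R (x - b)"
    using p_x by (simp add: mult.commute)
  then show "b = a" using \<open>0 < d\<close> s(2) by simp
qed

lemma reach_at_le_one_if_proj_not_unique: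
  assumes "a \<in> \<xi> x" "b \<in> \<xi> x" "b \<noteq> a"
  shows "reach_at \<phi> K x a \<le> 1"
proof (rule ccontr)
  assume "\<not> reach_at \<phi> K x a \<le> 1"
  then obtain s where "s \<in> reach_params \<phi> K x a" "1 < s"
    unfolding reach_at_def not_le less_Sup_iff by auto
  then show False using proj_set_unique_if_ray_extends assms by blast
qed

lemma reach_at_proj_independent:
  assumes "a \<in> \<xi> x" "b \<in> \<xi> x"
  shows "reach_at \<phi> K x a = reach_at \<phi> K x b"
  using reach_at_le_one_if_proj_not_unique[OF assms] reach_at_le_one_if_proj_not_unique[OF assms(2,1)]
    one_le_reach_at[of x a] one_le_reach_at[of x b]
  by (cases "a = b") simp_all

lemma reach_fun_eq_reach_at: "a \<in> \<xi> x \<Longrightarrow> reach_fun \<phi> K x = reach_at \<phi> K x a"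
  unfolding reach_fun_eq_reach_at_some using reach_at_proj_independent some_mem_proj_set by blast

lemma one_le_reach_fun: "1 \<le> reach_fun \<phi> K x"
  using reach_fun_eq_reach_at[OF some_mem_proj_set] one_le_reach_at by simp

lemma closed_superlevel_reach_fun: "closed {x. c \<le> reach_fun \<phi> K x}"
  unfolding closed_sequential_limits
proof (intro allI impI, elim conjE)
  fix xs l assume xs: "\<forall>n. xs n \<in> {x. c \<le> reach_fun \<phi> K x}" and lim: "xs \<longlonglongrightarrow> l"
  define as where "as n = (SOME a. a \<in> \<xi> (xs n))" for n
  have as: "as n \<in> \<xi> (xs n)" for n unfolding as_def by (rule some_mem_proj_set)
  obtain r a where r: "strict_mono r" "(as \<circ> r) \<longlonglongrightarrow> a" and a: "a \<in> \<xi> l"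
    using proj_set_limit[OF lim as] by blast
  have "c \<le> reach_at \<phi> K l a"
    unfolding le_reach_at_iff[OF a]
  proof (intro allI impI)
    fix t assume t: "0 \<le> t" "ereal t < c"
    have "t \<in> reach_params \<phi> K (xs n) (as n)" for n
      using xs t le_reach_at_iff[OF as] reach_fun_eq_reach_at[OF as] by simp
    then show "t \<in> reach_params \<phi> K l a"
      using reach_params_limit[OF LIMSEQ_subseq_LIMSEQ[OF lim r(1)] r(2)] by simp
  qed
  then show "l \<in> {x. c \<le> reach_fun \<phi> K x}" using reach_fun_eq_reach_at[OF a] by simp
qed

lemma upper_semicontinuous_reach_fun: "upper_semicontinuous (reach_fun \<phi> K)"
  unfolding upper_semicontinuous_def
proof
  fix c
  have "{x. reach_fun \<phi> K x < c} = - {x. c \<le> reach_fun \<phi> K x}" by (auto simp: not_le)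
  then show "open {x. reach_fun \<phi> K x < c}" using closed_superlevel_reach_fun by (simp add: open_Compl)
qed

lemma reach_fun_along_ray:
  assumes a: "a \<in> \<xi> x" and "0 < t" and "ereal t \<le> reach_fun \<phi> K x"
  shows "reach_fun \<phi> K x = ereal t * reach_fun \<phi> K (a + t *\<^sub>R (x - a))"
proof -
  have t: "t \<in> reach_params \<phi> K x a"
    using mem_reach_params_iff[OF a] assms(2,3) reach_fun_eq_reach_at[OF a] by simp
  show ?thesis
    using reach_at_along_ray[OF \<open>0 < t\<close> t] reach_fun_eq_reach_at[OF a]
      reach_fun_eq_reach_at[OF proj_set_along_ray[OF a _ t]] \<open>0 < t\<close> by simp
qed

lemma reach_fun_eq_one_if_mem_cut_locus:
  assumes "z \<in> cut_locus \<phi> K"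
  shows "reach_fun \<phi> K z = 1"
proof -
  obtain a \<eta> where z: "z = a + real_of_ereal (reach_normal \<phi> K a \<eta>) *\<^sub>R \<eta>"
    and N: "(a, \<eta>) \<in> normal_bundle \<phi> K" and fin: "reach_normal \<phi> K a \<eta> < \<infinity>"
    using assms unfolding cut_locus_def by auto
  obtain s where "a \<in> K" "\<phi> \<eta> = 1" "0 < s" and ds: "\<delta> (a + s *\<^sub>R \<eta>) = s"
    using N unfolding normal_bundle_def by auto
  define x where "x = a + s *\<^sub>R \<eta>"
  have a: "a \<in> \<xi> x"
    using \<open>a \<in> K\<close> \<open>\<phi> \<eta> = 1\<close> ds \<open>0 < s\<close> unfolding proj_set_def x_def by (simp add: scaleR)
  have dx: "\<delta> x = s" using ds by (simp add: x_def)
  then have "x \<notin> K" using dist_fun_eq_0_iff[of x] \<open>0 < s\<close> by simp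
  have "\<eta> = (1 / \<delta> x) *\<^sub>R (x - a)" using dx \<open>0 < s\<close> by (simp add: x_def)
  then have N_eq: "reach_normal \<phi> K a \<eta> = ereal s * reach_at \<phi> K x a"
    using reach_normal_eq[OF a \<open>x \<notin> K\<close>] dx by simp
  then obtain \<rho> where \<rho>: "reach_at \<phi> K x a = ereal \<rho>"
    using fin \<open>0 < s\<close> one_le_reach_at[of x a] by (cases "reach_at \<phi> K x a") auto
  have "1 \<le> \<rho>" using one_le_reach_at[of x a] \<rho> by simp
  have \<rho>_mem: "\<rho> \<in> reach_params \<phi> K x a" using mem_reach_params_iff[OF a] \<rho> \<open>1 \<le> \<rho>\<close> by simp
  have z_eq: "z = a + \<rho> *\<^sub>R (x - a)" using z N_eq \<rho> x_def by simp
  have "ereal \<rho> = ereal \<rho> * reach_at \<phi> K z a"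
    using reach_at_along_ray[OF _ \<rho>_mem] \<rho> z_eq \<open>1 \<le> \<rho>\<close> by simp
  then have "reach_at \<phi> K z a = 1" using \<open>1 \<le> \<rho>\<close> by (cases "reach_at \<phi> K z a") auto
  then show ?thesis
    using reach_fun_eq_reach_at[OF proj_set_along_ray[OF a _ \<rho>_mem]] z_eq \<open>1 \<le> \<rho>\<close> by simp
qed

lemma mem_cut_locus_if_reach_fun_eq_one:
  assumes "reach_fun \<phi> K x = 1"
  shows "x \<in> cut_locus \<phi> K"
proof -
  obtain a where a: "a \<in> \<xi> x" by (rule proj_set_nonempty)
  have R: "reach_at \<phi> K x a = 1" using assms reach_fun_eq_reach_at[OF a] by simp
  then have "x \<notin> K" using reach_at_of_mem[OF _ a] by auto
  then have d: "0 < \<delta> x" by (rule dist_fun_pos)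
  define \<eta> where "\<eta> = (1 / \<delta> x) *\<^sub>R (x - a)"
  have x: "x = a + \<delta> x *\<^sub>R \<eta>" using d by (simp add: \<eta>_def)
  have "\<phi> \<eta> = 1" using d proj_setD(2)[OF a] by (simp add: \<eta>_def scaleR)
  then have "(a, \<eta>) \<in> normal_bundle \<phi> K"
    using proj_setD(1)[OF a] d x unfolding normal_bundle_def by auto
  moreover have "reach_normal \<phi> K a \<eta> = ereal (\<delta> x)"
    using reach_normal_eq[OF a \<open>x \<notin> K\<close>] R by (simp add: \<eta>_def)
  ultimately show ?thesis unfolding cut_locus_def using x by force
qed

end

theorem lemma2p33:
  fixes \<phi> :: "real^'n \<Rightarrow> real" and K :: "(real^'n) set"
  assumes "strictly_convex_norm \<phi>"
    and "C2_on (UNIV - {0}) \<phi>"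
    and "closed K" and "K \<noteq> {}"
  shows "(\<forall>x. 1 \<le> reach_fun \<phi> K x) \<and> upper_semicontinuous (reach_fun \<phi> K)
    \<and> (\<forall>x a t. a \<in> proj_set \<phi> K x \<longrightarrow> 0 < t \<longrightarrow> ereal t \<le> reach_fun \<phi> K x \<longrightarrow>
          reach_fun \<phi> K x = ereal t * reach_fun \<phi> K (a + t *\<^sub>R (x - a)))
    \<and> cut_locus \<phi> K = {x. reach_fun \<phi> K x = 1}"
proof -
  interpret strictly_convex_dist_to_closed \<phi> K
    using assms(1,3,4) by unfold_locales (auto simp: strictly_convex_norm_def)
  have "cut_locus \<phi> K = {x. reach_fun \<phi> K x = 1}"
    using reach_fun_eq_one_if_mem_cut_locus mem_cut_locus_if_reach_fun_eq_one by blast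
  then show ?thesis
    using one_le_reach_fun upper_semicontinuous_reach_fun reach_fun_along_ray by blast
qed

end
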